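(* For $\varepsilon\in[0,1]$ let $\Phi_{\mathrm{feas}}(\varepsilon)=\{(\pi_1,\dots,\pi_N,\pi_c)\in\Pi^{N+1}:\|\pi_i-\pi_c\|_\infty\le\varepsilon\ \text{for all } i\}$ and $$S^{\mathrm{CAL}}(\varepsilon)=\arg\min_{(\pi_1,\dots,\pi_N,\pi_c)\in\Phi_{\mathrm{feas}}(\varepsilon)}\sum_{i=1}^N\|\Phi^\top\mu^{\pi_i}_i-\Phi^\top\mu^{\pi^{E_i}}_i\|_1 .$$ Then the set-valued map $S^{\mathrm{CAL}}:[0,1]\rightrightarrows\Pi^{N+1}$ is upper semicontinuous at $\varepsilon=0$.
   Context: Let $\mathcal{S},\mathcal{A}$ be finite sets, $\gamma\in(0,1)$, $\rho$ a probability distribution on $\mathcal{S}$, and for $i=1,\dots,N$ environment $i$ is the Markov decision process $(\mathcal{S},\mathcal{A},P^i,\gamma,\rho)$. $\Pi$ is the set of stationary policies $\pi:\mathcal{S}\to\Delta(\mathcal{A})$, identified with vectors $(\pi(s,a))_{(s,a)}\in\mathbb{R}^{|\mathcal{S}||\mathcal{A}|}$, and $\|\pi-\pi'\|_\infty=\max_{(s,a)}|\pi(s,a)-\pi'(s,a)|$. $\mu^\pi_i(s,a)=\sum_{t\ge0}\gamma^t\mathbb{P}^{\pi,i}_\rho[s_t=s,a_t=a]$ is the discounted occupation measure (trajectory law: $s_0\sim\rho$, $a_t\sim\pi(s_t,\cdot)$, $s_{t+1}\sim P^i(\cdot\mid s_t,a_t)$). Expert policies $\pi^{E_i}\in\Pi$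 and a cost basis matrix $\Phi\in\mathbb{R}^{|\mathcal{S}||\mathcal{A}|\times n_c}$ with columns of sup-norm at most $1$ are given. A set-valued map $F:X\rightrightarrows Y$ is upper semicontinuous at $x_0$ if for every neighborhood $U$ of the set $F(x_0)$ there is a neighborhood $W$ of $x_0$ with $F(x)\subset U$ for all $x\in W$. *)

theory Defs
  imports "HOL-Analysis.Analysis"
begin

definition policies :: "('s::finite \<Rightarrow> 'a::finite \<Rightarrow> real) set" where
  "policies = {\<pi>. (\<forall>s a. 0 \<le> \<pi> s a) \<and> (\<forall>s. (\<Sum>a\<in>UNIV. \<pi> s a) = 1)}"

definition linf_dist :: "('s::finite \<Rightarrow> 'a::finite \<Rightarrow> real) \<Rightarrow> ('s \<Rightarrow> 'a \<Rightarrow> real) \<Rightarrow> real" where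
  "linf_dist \<pi> \<pi>' = Max ((\<lambda>(s,a). \<bar>\<pi> s a - \<pi>' s a\<bar>) ` UNIV)"

text \<open>Marginal law of s_t: s_0 ~ rho, a_t ~ pi(s_t,.), s_{t+1} ~ P(.|s_t,a_t).
  P s a s' is the probability of moving from s to s' under action a.\<close>
primrec state_dist :: "('s::finite \<Rightarrow> 'a::finite \<Rightarrow> 's \<Rightarrow> real) \<Rightarrow> ('s \<Rightarrow> real)
    \<Rightarrow> ('s \<Rightarrow> 'a \<Rightarrow> real) \<Rightarrow> nat \<Rightarrow> 's \<Rightarrow> real" where
  "state_dist P \<rho> \<pi> 0 = \<rho>"
| "state_dist P \<rho> \<pi> (Suc t) =
     (\<lambda>s'. \<Sum>s\<in>UNIV. \<Sum>a\<in>UNIV. state_dist P \<rho> \<pi> t s * \<pi> s a * P s a s')"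

definition occ :: "real \<Rightarrow> ('s::finite \<Rightarrow> real) \<Rightarrow> ('s \<Rightarrow> 'a::finite \<Rightarrow> 's \<Rightarrow> real)
    \<Rightarrow> ('s \<Rightarrow> 'a \<Rightarrow> real) \<Rightarrow> 's \<Rightarrow> 'a \<Rightarrow> real" where
  "occ \<gamma> \<rho> P \<pi> s a = (\<Sum>t. \<gamma> ^ t * (state_dist P \<rho> \<pi> t s * \<pi> s a))"

text \<open>Phi^T mu, with Phi given as Phi s a k (row (s,a), column k).\<close>
definition feat :: "('s::finite \<Rightarrow> 'a::finite \<Rightarrow> 'c::finite \<Rightarrow> real) \<Rightarrow> ('s \<Rightarrow> 'a \<Rightarrow> real) \<Rightarrow> 'c \<Rightarrow> real" where
  "feat \<Phi> \<mu> k = (\<Sum>s\<in>UNIV. \<Sum>a\<in>UNIV. \<Phi> s a k * \<mu> s a)"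

definition cal_obj :: "real \<Rightarrow> ('s::finite \<Rightarrow> real) \<Rightarrow> ('i::finite \<Rightarrow> 's \<Rightarrow> 'a::finite \<Rightarrow> 's \<Rightarrow> real)
    \<Rightarrow> ('i \<Rightarrow> 's \<Rightarrow> 'a \<Rightarrow> real) \<Rightarrow> ('s \<Rightarrow> 'a \<Rightarrow> 'c::finite \<Rightarrow> real)
    \<Rightarrow> ('i \<Rightarrow> 's \<Rightarrow> 'a \<Rightarrow> real) \<Rightarrow> real" where
  "cal_obj \<gamma> \<rho> P \<pi>E \<Phi> \<pi>s =
     (\<Sum>i\<in>UNIV. \<Sum>k\<in>UNIV.
        \<bar>feat \<Phi> (occ \<gamma> \<rho> (P i) (\<pi>s i)) k - feat \<Phi> (occ \<gamma> \<rho> (P i) (\<pi>E i)) k\<bar>)"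

definition feas :: "real \<Rightarrow> (('i \<Rightarrow> 's::finite \<Rightarrow> 'a::finite \<Rightarrow> real) \<times> ('s \<Rightarrow> 'a \<Rightarrow> real)) set" where
  "feas \<epsilon> = {(\<pi>s, \<pi>c). (\<forall>i. \<pi>s i \<in> policies) \<and> \<pi>c \<in> policies \<and>
                         (\<forall>i. linf_dist (\<pi>s i) \<pi>c \<le> \<epsilon>)}"

definition S_CAL :: "real \<Rightarrow> ('s::finite \<Rightarrow> real) \<Rightarrow> ('i::finite \<Rightarrow> 's \<Rightarrow> 'a::finite \<Rightarrow> 's \<Rightarrow> real)
    \<Rightarrow> ('i \<Rightarrow> 's \<Rightarrow> 'a \<Rightarrow> real) \<Rightarrow> ('s \<Rightarrow> 'a \<Rightarrow> 'c::finite \<Rightarrow> real) \<Rightarrow> real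
    \<Rightarrow> (('i \<Rightarrow> 's \<Rightarrow> 'a \<Rightarrow> real) \<times> ('s \<Rightarrow> 'a \<Rightarrow> real)) set" where
  "S_CAL \<gamma> \<rho> P \<pi>E \<Phi> \<epsilon> =
     {x \<in> feas \<epsilon>. \<forall>y \<in> feas \<epsilon>. cal_obj \<gamma> \<rho> P \<pi>E \<Phi> (fst x) \<le> cal_obj \<gamma> \<rho> P \<pi>E \<Phi> (fst y)}"

definition usc_at :: "('x::topological_space \<Rightarrow> 'y::topological_space set) \<Rightarrow> 'x set \<Rightarrow> 'x \<Rightarrow> bool" where
  "usc_at F D x0 \<longleftrightarrow>
     (\<forall>U. open U \<and> F x0 \<subseteq> U \<longrightarrow> (\<exists>W. open W \<and> x0 \<in> W \<and> (\<forall>x \<in> W \<inter> D. F x \<subseteq> U)))"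

end

theory Submission
  imports Defs
begin

text \<open>Every \<open>feas \<epsilon>\<close> lies in the compact set \<open>K = \<Pi>\<^sup>N \<times> \<Pi>\<close>, on
  which the CAL objective \<open>f\<close> is continuous: each occupation measure is a uniformly convergent
  series of polynomials in \<open>\<pi>\<close>. The consensus deviation \<open>g\<close> is continuous, at most \<open>C \<epsilon>\<close> on
  \<open>feas \<epsilon>\<close>, and vanishes only on \<open>feas 0\<close>. For an open \<open>U \<supseteq> S(0)\<close>, let \<open>m\<close> be the minimum of
  \<open>f\<close> over \<open>feas 0\<close>; then \<open>max g (f - m)\<close> is positive on the compact set \<open>K - U\<close>, hence at
  least some \<open>\<delta> > 0\<close> there. A minimiser over \<open>feas \<epsilon> \<supseteq> feas 0\<close> has \<open>f \<le> m\<close> and \<open>g \<le> C \<epsilon>\<close>,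
  so it lies in \<open>U\<close> once \<open>C \<epsilon> < \<delta>\<close>.\<close>

lemma compact_PiE_UNIV:
  fixes S :: "'b::topological_space set"
  assumes "compact S"
  shows "compact (Pi\<^sub>E (UNIV :: 'i set) (\<lambda>_. S))"
  using assms compactin_PiE[of "\<lambda>_. euclidean" UNIV "\<lambda>_. S"]
  by (simp add: euclidean_product_topology)

lemma continuous_on_apply2:
  fixes f :: "'x::topological_space \<Rightarrow> 's \<Rightarrow> 'a \<Rightarrow> 'b::topological_space"
  assumes "continuous_on A f"
  shows "continuous_on A (\<lambda>x. f x s a)"
  using continuous_on_product_then_coordinatewise[OF
      continuous_on_product_then_coordinatewise[OF assms]] .

lemma usc_at_argmin_relaxation:
  fixes f g :: "'x::topological_space \<Rightarrow> real" and F :: "real \<Rightarrow> 'x set"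
  assumes "compact K" and "continuous_on K f" and "continuous_on K g"
    and F_K: "\<And>\<epsilon>. F \<epsilon> \<subseteq> K"
    and "F 0 \<noteq> {}"
    and F_mono: "\<And>\<epsilon>. \<epsilon> \<in> D \<Longrightarrow> F 0 \<subseteq> F \<epsilon>"
    and g_F: "\<And>\<epsilon> x. \<epsilon> \<in> D \<Longrightarrow> x \<in> F \<epsilon> \<Longrightarrow> g x \<le> c * \<epsilon>"
    and F0_g: "\<And>x. x \<in> K \<Longrightarrow> g x \<le> 0 \<Longrightarrow> x \<in> F 0"
  shows "usc_at (\<lambda>\<epsilon>. {x \<in> F \<epsilon>. \<forall>y \<in> F \<epsilon>. f x \<le> f y}) D 0"
  unfolding usc_at_def
proof (intro allI impI)
  fix U assume U: "open U \<and> {x \<in> F 0. \<forall>y \<in> F 0. f x \<le> f y} \<subseteq> U"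
  define m where "m = Inf (f ` F 0)"
  define \<phi> where "\<phi> x = max (g x) (f x - m)" for x
  have "bdd_below (f ` K)"
    using compact_continuous_image[OF assms(2,1)]
    by (simp add: bounded_imp_bdd_below compact_imp_bounded)
  then have m_le: "m \<le> f y" if "y \<in> F 0" for y
    unfolding m_def using that F_K by (meson bdd_below_mono cINF_lower image_mono)
  obtain \<delta> where "0 < \<delta>" and \<delta>: "\<And>x. x \<in> K - U \<Longrightarrow> \<delta> \<le> \<phi> x"
  proof (cases "K - U = {}")
    case False
    have "continuous_on (K - U) \<phi>"
      unfolding \<phi>_def
      by (intro continuous_intros continuous_on_subset[OF assms(2)]
          continuous_on_subset[OF assms(3)]) auto
    moreover have "compact (K - U)" using U \<open>compact K\<close> by (simp add: compact_diff)
    ultimately obtain x0 where x0: "x0 \<in> K - U" "\<And>x. x \<in> K - U \<Longrightarrow> \<phi> x0 \<le> \<phi> x"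
      using continuous_attains_inf False by metis
    have "0 < \<phi> x0"
    proof (rule ccontr)
      assume "\<not> 0 < \<phi> x0"
      then have "x0 \<in> F 0" and "\<forall>y \<in> F 0. f x0 \<le> f y"
        using x0(1) F0_g m_le unfolding \<phi>_def by force+
      then show False using U x0(1) by blast
    qed
    with x0 that show ?thesis by blast
  qed (use that[of 1] in auto)
  show "\<exists>W. open W \<and> 0 \<in> W \<and> (\<forall>\<epsilon> \<in> W \<inter> D. {x \<in> F \<epsilon>. \<forall>y \<in> F \<epsilon>. f x \<le> f y} \<subseteq> U)"
  proof (intro exI[of _ "{\<epsilon>. c * \<epsilon> < \<delta>}"] conjI ballI subsetI)
    show "open {\<epsilon>. c * \<epsilon> < \<delta>}"
      by (intro open_Collect_less continuous_intros)
    show "0 \<in> {\<epsilon>. c * \<epsilon> < \<delta>}" using \<open>0 < \<delta>\<close> by simp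
    fix \<epsilon> x assume \<epsilon>: "\<epsilon> \<in> {\<epsilon>. c * \<epsilon> < \<delta>} \<inter> D"
      and x: "x \<in> {x \<in> F \<epsilon>. \<forall>y \<in> F \<epsilon>. f x \<le> f y}"
    have "g x < \<delta>" using g_F[of \<epsilon> x] \<epsilon> x by auto
    moreover have "f x \<le> m"
      unfolding m_def using x F_mono[of \<epsilon>] \<epsilon> \<open>F 0 \<noteq> {}\<close> by (auto intro!: cINF_greatest)
    ultimately have "\<phi> x < \<delta>" using \<open>0 < \<delta>\<close> unfolding \<phi>_def by simp
    then show "x \<in> U" using \<delta>[of x] x F_K by force
  qed
qed

lemma policies_nonneg: "\<pi> \<in> policies \<Longrightarrow> 0 \<le> \<pi> s a"
  by (simp add: policies_def)

lemma policies_le_one: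
  assumes "\<pi> \<in> policies"
  shows "\<pi> s a \<le> 1"
proof -
  have "\<pi> s a \<le> (\<Sum>a\<in>UNIV. \<pi> s a)"
    using assms by (intro member_le_sum) (auto simp: policies_def)
  then show ?thesis using assms by (simp add: policies_def)
qed

lemma closed_policies: "closed policies"
proof -
  have eq: "policies = (\<Inter>s a. {\<pi>. 0 \<le> \<pi> s a}) \<inter> (\<Inter>s. {\<pi>. (\<Sum>a\<in>UNIV. \<pi> s a) = 1})"
    by (auto simp: policies_def)
  show ?thesis
    unfolding eq by (intro closed_Int closed_INT ballI closed_Collect_le closed_Collect_eq
        continuous_on_const continuous_on_sum continuous_on_apply2[OF continuous_on_id])
qed

lemma compact_policies: "compact (policies :: ('s::finite \<Rightarrow> 'a::finite \<Rightarrow> real) set)"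
proof -
  let ?B = "Pi\<^sub>E UNIV (\<lambda>_. Pi\<^sub>E UNIV (\<lambda>_. {0..1::real}))"
  have "(policies :: ('s \<Rightarrow> 'a \<Rightarrow> real) set) = ?B \<inter> policies"
    using policies_nonneg policies_le_one by fastforce
  moreover have "compact (?B \<inter> policies)"
    by (intro compact_Int_closed compact_PiE_UNIV compact_Icc closed_policies)
  ultimately show ?thesis by metis
qed

lemma continuous_on_state_dist: "continuous_on A (\<lambda>\<pi>. state_dist P \<rho> \<pi> t s)"
proof (induction t arbitrary: s)
  case (Suc t)
  then show ?case
    by (simp, intro continuous_intros continuous_on_apply2[OF continuous_on_id]) auto
qed simp

lemma state_dist_nonneg:
  assumes "\<forall>s. 0 \<le> \<rho> s" and "\<forall>s a s'. 0 \<le> P s a s'" and "\<pi> \<in> policies"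
  shows "0 \<le> state_dist P \<rho> \<pi> t s"
  using assms by (induction t arbitrary: s) (auto intro!: sum_nonneg simp: policies_def)

lemma sum_state_dist:
  assumes "(\<Sum>s\<in>UNIV. \<rho> s) = 1" and "\<forall>s a. (\<Sum>s'\<in>UNIV. P s a s') = 1" and "\<pi> \<in> policies"
  shows "(\<Sum>s\<in>UNIV. state_dist P \<rho> \<pi> t s) = 1"
proof (induction t)
  case (Suc t)
  have "(\<Sum>s'\<in>UNIV. state_dist P \<rho> \<pi> (Suc t) s')
      = (\<Sum>s\<in>UNIV. \<Sum>a\<in>UNIV. \<Sum>s'\<in>UNIV. state_dist P \<rho> \<pi> t s * \<pi> s a * P s a s')"
    unfolding state_dist.simps by (subst sum.swap) (rule sum.cong[OF refl], rule sum.swap)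
  also have "\<dots> = (\<Sum>s\<in>UNIV. state_dist P \<rho> \<pi> t s)"
    using assms(2,3) by (simp add: policies_def flip: sum_distrib_left)
  finally show ?case using Suc by simp
qed (use assms in simp)

lemma state_dist_le_one:
  assumes "\<forall>s. 0 \<le> \<rho> s" and "(\<Sum>s\<in>UNIV. \<rho> s) = 1"
    and "\<forall>s a s'. 0 \<le> P s a s'" and "\<forall>s a. (\<Sum>s'\<in>UNIV. P s a s') = 1"
    and "\<pi> \<in> policies"
  shows "state_dist P \<rho> \<pi> t s \<le> 1"
proof -
  have "state_dist P \<rho> \<pi> t s \<le> (\<Sum>s\<in>UNIV. state_dist P \<rho> \<pi> t s)"
    using assms by (intro member_le_sum state_dist_nonneg) auto
  then show ?thesis using sum_state_dist assms by metis
qed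

lemma continuous_on_occ:
  fixes P :: "'s::finite \<Rightarrow> 'a::finite \<Rightarrow> 's \<Rightarrow> real"
  assumes "0 \<le> \<gamma>" and "\<gamma> < 1"
    and "\<forall>s. 0 \<le> \<rho> s" and "(\<Sum>s\<in>UNIV. \<rho> s) = 1"
    and "\<forall>s a s'. 0 \<le> P s a s'" and "\<forall>s a. (\<Sum>s'\<in>UNIV. P s a s') = 1"
  shows "continuous_on policies (\<lambda>\<pi>. occ \<gamma> \<rho> P \<pi> s a)"
proof -
  let ?f = "\<lambda>t \<pi>. \<gamma> ^ t * (state_dist P \<rho> \<pi> t s * \<pi> s a)"
  have "uniform_limit policies (\<lambda>n \<pi>. \<Sum>t<n. ?f t \<pi>) (\<lambda>\<pi>. \<Sum>t. ?f t \<pi>) sequentially"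
  proof (rule Weierstrass_m_test)
    show "summable (\<lambda>t. \<gamma> ^ t)"
      using assms(1,2) by (simp add: summable_geometric)
    fix t and \<pi> :: "'s \<Rightarrow> 'a \<Rightarrow> real"
    assume "\<pi> \<in> policies"
    then have "0 \<le> state_dist P \<rho> \<pi> t s" "state_dist P \<rho> \<pi> t s \<le> 1" "0 \<le> \<pi> s a" "\<pi> s a \<le> 1"
      using assms(3-6) by (simp_all add: state_dist_nonneg state_dist_le_one policies_nonneg
          policies_le_one)
    then have "\<bar>state_dist P \<rho> \<pi> t s * \<pi> s a\<bar> \<le> 1"
      by (simp add: abs_mult mult_le_one)
    then show "norm (?f t \<pi>) \<le> \<gamma> ^ t"
      using assms(1) by (simp add: abs_mult mult_left_le)
  qed
  then have "continuous_on policies (\<lambda>\<pi>. \<Sum>t. ?f t \<pi>)"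
    by (rule uniform_limit_theorem[rotated])
       (auto intro!: always_eventually continuous_intros continuous_on_state_dist
         continuous_on_apply2[OF continuous_on_id])
  then show ?thesis
    unfolding occ_def .
qed

lemma continuous_on_cal_obj:
  assumes "0 \<le> \<gamma>" and "\<gamma> < 1"
    and "\<forall>s. 0 \<le> \<rho> s" and "(\<Sum>s\<in>UNIV. \<rho> s) = 1"
    and "\<forall>i s a s'. 0 \<le> P i s a s'" and "\<forall>i s a. (\<Sum>s'\<in>UNIV. P i s a s') = 1"
  shows "continuous_on (Pi\<^sub>E UNIV (\<lambda>_. policies)) (cal_obj \<gamma> \<rho> P \<pi>E \<Phi>)"
proof -
  have "continuous_on (Pi\<^sub>E UNIV (\<lambda>_. policies)) (\<lambda>\<pi>s. occ \<gamma> \<rho> (P i) (\<pi>s i) s a)" for i s a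
    by (rule continuous_on_compose2[OF continuous_on_occ
          continuous_on_product_then_coordinatewise[OF continuous_on_id]])
       (use assms in auto)
  then show ?thesis
    unfolding cal_obj_def feat_def by (intro continuous_intros)
qed

lemma linf_dist_le_iff: "linf_dist \<pi> \<pi>' \<le> e \<longleftrightarrow> (\<forall>s a. \<bar>\<pi> s a - \<pi>' s a\<bar> \<le> e)"
  unfolding linf_dist_def by (subst Max_le_iff) auto

lemma feas_mono: "\<epsilon> \<le> \<epsilon>' \<Longrightarrow> feas \<epsilon> \<subseteq> feas \<epsilon>'"
  by (auto simp: feas_def intro: order_trans)

lemma feas_subset: "feas \<epsilon> \<subseteq> Pi\<^sub>E UNIV (\<lambda>_. policies) \<times> policies"
  by (auto simp: feas_def)

definition consensus_deviation ::
    "('i::finite \<Rightarrow> 's::finite \<Rightarrow> 'a::finite \<Rightarrow> real) \<times> ('s \<Rightarrow> 'a \<Rightarrow> real) \<Rightarrow> real" where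
  "consensus_deviation x = (\<Sum>i\<in>UNIV. \<Sum>s\<in>UNIV. \<Sum>a\<in>UNIV. \<bar>fst x i s a - snd x s a\<bar>)"

lemma continuous_on_consensus_deviation:
  fixes A :: "(('i::finite \<Rightarrow> 's::finite \<Rightarrow> 'a::finite \<Rightarrow> real) \<times> ('s \<Rightarrow> 'a \<Rightarrow> real)) set"
  shows "continuous_on A consensus_deviation"
proof -
  have "continuous_on A (\<lambda>x. fst x i s a)" for i :: 'i and s a
    by (rule continuous_on_apply2[OF continuous_on_product_then_coordinatewise[OF
          continuous_on_fst[OF continuous_on_id]]])
  moreover have "continuous_on A (\<lambda>x. snd x s a)" for s a
    by (rule continuous_on_apply2[OF continuous_on_snd[OF continuous_on_id]])
  ultimately show ?thesis
    unfolding consensus_deviation_def by (intro continuous_intros)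
qed

lemma consensus_deviation_le:
  fixes x :: "('i::finite \<Rightarrow> 's::finite \<Rightarrow> 'a::finite \<Rightarrow> real) \<times> ('s \<Rightarrow> 'a \<Rightarrow> real)"
    and \<epsilon> :: real
  assumes "x \<in> feas \<epsilon>"
  shows "consensus_deviation x \<le> real (CARD('i) * CARD('s) * CARD('a)) * \<epsilon>"
proof -
  have "\<bar>fst x i s a - snd x s a\<bar> \<le> \<epsilon>" for i s a
    using assms by (auto simp: feas_def linf_dist_le_iff)
  then have "consensus_deviation x
      \<le> (\<Sum>i\<in>(UNIV::'i set). \<Sum>s\<in>(UNIV::'s set). \<Sum>a\<in>(UNIV::'a set). \<epsilon>)"
    unfolding consensus_deviation_def by (intro sum_mono)
  then show ?thesis by simp
qed

lemma feas_0_if_consensus_deviation_le_0: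
  assumes "x \<in> Pi\<^sub>E UNIV (\<lambda>_. policies) \<times> policies" and "consensus_deviation x \<le> 0"
  shows "x \<in> feas 0"
proof -
  have "0 \<le> consensus_deviation x"
    unfolding consensus_deviation_def by (intro sum_nonneg) auto
  with assms(2) have "consensus_deviation x = 0"
    by simp
  then have "\<forall>i s a. \<bar>fst x i s a - snd x s a\<bar> = 0"
    by (simp add: consensus_deviation_def sum_nonneg sum_nonneg_eq_0_iff)
  with assms(1) show ?thesis
    by (auto simp: feas_def linf_dist_le_iff)
qed

theorem lemma4:
  fixes \<gamma> :: real
    and \<rho> :: "'s::finite \<Rightarrow> real"
    and P :: "'i::finite \<Rightarrow> 's \<Rightarrow> 'a::finite \<Rightarrow> 's \<Rightarrow> real"
    and \<pi>E :: "'i \<Rightarrow> 's \<Rightarrow> 'a \<Rightarrow> real"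
    and \<Phi> :: "'s \<Rightarrow> 'a \<Rightarrow> 'c::finite \<Rightarrow> real"
  assumes "0 < \<gamma>" and "\<gamma> < 1"
    and "\<forall>s. 0 \<le> \<rho> s" and "(\<Sum>s\<in>UNIV. \<rho> s) = 1"
    and "\<forall>i s a s'. 0 \<le> P i s a s'" and "\<forall>i s a. (\<Sum>s'\<in>UNIV. P i s a s') = 1"
    and "\<forall>i. \<pi>E i \<in> policies"
    and "\<forall>s a k. \<bar>\<Phi> s a k\<bar> \<le> 1"
  shows "usc_at (S_CAL \<gamma> \<rho> P \<pi>E \<Phi>) {0..1} 0"
proof -
  have "usc_at (\<lambda>\<epsilon>. {x \<in> feas \<epsilon>.
      \<forall>y \<in> feas \<epsilon>. cal_obj \<gamma> \<rho> P \<pi>E \<Phi> (fst x) \<le> cal_obj \<gamma> \<rho> P \<pi>E \<Phi> (fst y)}) {0..1} 0"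
  proof (rule usc_at_argmin_relaxation)
    let ?K = "Pi\<^sub>E (UNIV :: 'i set) (\<lambda>_. policies :: ('s \<Rightarrow> 'a \<Rightarrow> real) set) \<times> policies"
    let ?F = "feas :: real \<Rightarrow> (('i \<Rightarrow> 's \<Rightarrow> 'a \<Rightarrow> real) \<times> ('s \<Rightarrow> 'a \<Rightarrow> real)) set"
    show "compact ?K"
      by (intro compact_Times compact_PiE_UNIV compact_policies)
    show "continuous_on ?K (\<lambda>x. cal_obj \<gamma> \<rho> P \<pi>E \<Phi> (fst x))"
      by (rule continuous_on_compose2[OF continuous_on_cal_obj
            continuous_on_fst[OF continuous_on_id]])
         (use assms in auto)
    show "continuous_on ?K consensus_deviation"
      by (rule continuous_on_consensus_deviation)
    show "feas \<epsilon> \<subseteq> ?K" for \<epsilon>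
      by (rule feas_subset)
    have "(\<lambda>_. \<pi>E i, \<pi>E i) \<in> ?F 0" for i
      using assms(7) by (simp add: feas_def linf_dist_le_iff)
    then show "?F 0 \<noteq> {}"
      by blast
    show "?F 0 \<subseteq> ?F \<epsilon>" if "\<epsilon> \<in> {0..1}" for \<epsilon>
      using that by (intro feas_mono) simp
    show "consensus_deviation x \<le> real (CARD('i) * CARD('s) * CARD('a)) * \<epsilon>"
      if "x \<in> ?F \<epsilon>" for x \<epsilon>
      using that by (rule consensus_deviation_le)
    show "x \<in> feas 0" if "x \<in> ?K" and "consensus_deviation x \<le> 0" for x
      using that by (rule feas_0_if_consensus_deviation_le_0)
  qed
  then show ?thesis
    unfolding S_CAL_def .
qed

end
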